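(* Let $(\mathbf X,\mathbf Y)$ be a general correlated source such that $\{\frac1n\log\frac1{P_{X^n|Y^n}(X^n|Y^n)}\}_{n\ge1}$ satisfies Condition (W). Then for any $0<\varepsilon\le1$, $\{\frac1n\overline h^\varepsilon(X^n)\}_{n\ge1}$ also satisfies Condition (W).
   Context: A general correlated source $(\mathbf X,\mathbf Y)=\{(X^n,Y^n)\}_{n\ge1}$ is an arbitrary sequence of pairs of random variables on $\mathcal X^n\times\mathcal Y^n$, $\mathcal X,\mathcal Y$ finite or countably infinite (no structural assumptions; marginal probabilities positive). Logs base 2. For $x^n\in\mathcal X^n$ and $\varepsilon\in(0,1]$: $\overline h^\varepsilon(x^n)=\inf\{a\in\mathbb R:\sum_{y^n:\log(1/P_{X^n|Y^n}(x^n|y^n))>a}P_{Y^n|X^n}(y^n|x^n)\le\varepsilon\}$. A sequence of discrete real random variables $\{Z_n\}$ satisfies Condition (W) if: (i) there is $M<\infty$ with $\mathbb E[Z_n]<M$ for all $n$; and (ii) whenever events $\mathcal A_n$ satisfy $\Pr(\mathcal A_n)\to0$, then $\lim_n\mathbb E[|Z_n|\mathbf 1_{\mathcal A_n}]=0$. *)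

theory Defs
  imports "HOL-Probability.Probability"
begin

text \<open>A general correlated source: for each n a joint distribution P n of (X^n, Y^n),
  where X^n, Y^n are words (lists) of length n over countable alphabets.\<close>

definition corr_source :: "(nat \<Rightarrow> ('a::countable list \<times> 'b::countable list) pmf) \<Rightarrow> bool" where
  "corr_source P \<longleftrightarrow> (\<forall>n. set_pmf (P n) \<subseteq> {(x, y). length x = n \<and> length y = n})"

definition PX :: "(nat \<Rightarrow> ('a \<times> 'b) pmf) \<Rightarrow> nat \<Rightarrow> 'a \<Rightarrow> real" where
  "PX P n x = pmf (map_pmf fst (P n)) x"

definition PY :: "(nat \<Rightarrow> ('a \<times> 'b) pmf) \<Rightarrow> nat \<Rightarrow> 'b \<Rightarrow> real" where
  "PY P n y = pmf (map_pmf snd (P n)) y"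

definition cond_XY :: "(nat \<Rightarrow> ('a \<times> 'b) pmf) \<Rightarrow> nat \<Rightarrow> 'a \<Rightarrow> 'b \<Rightarrow> real" where
  "cond_XY P n x y = pmf (P n) (x, y) / PY P n y"

definition cond_YX :: "(nat \<Rightarrow> ('a \<times> 'b) pmf) \<Rightarrow> nat \<Rightarrow> 'b \<Rightarrow> 'a \<Rightarrow> real" where
  "cond_YX P n y x = pmf (P n) (x, y) / PX P n x"

text \<open>The quantity overline-h^eps(x^n). The infimum is taken over a \<ge> 0
  (for eps < 1 this agrees with the infimum over all reals).\<close>
definition hbar :: "(nat \<Rightarrow> ('a \<times> 'b) pmf) \<Rightarrow> real \<Rightarrow> nat \<Rightarrow> 'a \<Rightarrow> real" where
  "hbar P eps n x = Inf {a. 0 \<le> a \<and>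
     (\<Sum>\<^sub>\<infinity> y \<in> {y. log 2 (1 / cond_XY P n x y) > a}. cond_YX P n y x) \<le> eps}"

definition condW :: "(nat \<Rightarrow> 'c measure) \<Rightarrow> (nat \<Rightarrow> 'c \<Rightarrow> real) \<Rightarrow> bool" where
  "condW M Z \<longleftrightarrow>
     (\<exists>B. \<forall>n\<ge>1. integrable (M n) (Z n) \<and> (\<integral>w. Z n w \<partial>M n) < B) \<and>
     (\<forall>A. (\<forall>n\<ge>1. A n \<in> sets (M n)) \<longrightarrow> (\<lambda>n. measure (M n) (A n)) \<longlonglongrightarrow> 0 \<longrightarrow>
        (\<lambda>n. \<integral>w. \<bar>Z n w\<bar> * indicator (A n) w \<partial>M n) \<longlonglongrightarrow> 0)"

end

theory Submission
  imports Defs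
begin

text \<open>
  For fixed \<open>x\<close>, every threshold \<open>a\<close> below \<open>hbar\<^sup>\<epsilon>(x)\<close> has conditional tail mass
  \<open>P(W > a | X = x) > \<epsilon>\<close>, where \<open>W = log (1 / P(X|Y))\<close>; Markov's inequality then gives
  \<open>\<epsilon> hbar\<^sup>\<epsilon>(x) \<le> E[W | X = x]\<close>. Hence \<open>H\<^sub>n = hbar\<^sup>\<epsilon>(X\<^sup>n)/n\<close> satisfies
  \<open>\<epsilon> E[H\<^sub>n 1\<^sub>S] \<le> E[Z\<^sub>n 1\<^sub>S]\<close> with \<open>Z\<^sub>n = W/n\<close> for every event \<open>S\<close> determined by \<open>X\<^sup>n\<close>, in
  particular for the level sets of \<open>H\<^sub>n\<close>. This transfers the bound on the means. For events
  \<open>A\<^sub>n\<close> with vanishing probability, truncate at \<open>K\<^sub>n = 1/\<delta>\<^sub>n\<close> where \<open>\<delta>\<^sub>n\<^sup>2 = P(A\<^sub>n) + 1/(n+1)\<close>: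
  \<open>E[H\<^sub>n 1\<^sub>A\<^sub>n] \<le> K\<^sub>n P(A\<^sub>n) + E[H\<^sub>n 1\<^bsub>H\<^sub>n \<ge> K\<^sub>n\<^esub>] \<le> \<delta>\<^sub>n + E[Z\<^sub>n 1\<^bsub>H\<^sub>n \<ge> K\<^sub>n\<^esub>]/\<epsilon>\<close>, and the last
  term vanishes by Condition (W) for \<open>Z\<close> because \<open>P(H\<^sub>n \<ge> K\<^sub>n) \<le> \<delta>\<^sub>n E[H\<^sub>n] \<rightarrow> 0\<close> by Markov.
\<close>

lemma condW_of_tail_dominated:
  fixes M :: "nat \<Rightarrow> 'c measure" and Z H :: "nat \<Rightarrow> 'c \<Rightarrow> real" and c :: real
  assumes Z: "condW M Z"
    and prob: "\<And>n. prob_space (M n)"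
    and H_nonneg: "\<And>n w. 0 \<le> H n w"
    and H_int: "\<And>n. n \<ge> 1 \<Longrightarrow> integrable (M n) (H n)"
    and c: "0 < c"
    and dom: "\<And>n K. n \<ge> 1 \<Longrightarrow>
      c * (\<integral>w. H n w * indicator {w \<in> space (M n). K \<le> H n w} w \<partial>M n)
        \<le> (\<integral>w. Z n w * indicator {w \<in> space (M n). K \<le> H n w} w \<partial>M n)"
  shows "condW M H"
proof -
  obtain B where Z_int: "\<And>n. n \<ge> 1 \<Longrightarrow> integrable (M n) (Z n)"
    and Z_bound: "\<And>n. n \<ge> 1 \<Longrightarrow> (\<integral>w. Z n w \<partial>M n) < B"
    and Z_small: "\<And>A. (\<forall>n\<ge>1. A n \<in> sets (M n)) \<Longrightarrow> (\<lambda>n. measure (M n) (A n)) \<longlonglongrightarrow> 0 \<Longrightarrow>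
        (\<lambda>n. \<integral>w. \<bar>Z n w\<bar> * indicator (A n) w \<partial>M n) \<longlonglongrightarrow> 0"
    using Z unfolding condW_def by blast
  have H_bound: "c * (\<integral>w. H n w \<partial>M n) < B" if n: "n \<ge> 1" for n
  proof -
    have "c * (\<integral>w. H n w \<partial>M n) \<le> (\<integral>w. Z n w \<partial>M n)"
      using dom[OF n, of 0] H_nonneg by (simp cong: Bochner_Integration.integral_cong)
    then show ?thesis using Z_bound[OF n] by linarith
  qed
  show ?thesis
    unfolding condW_def
  proof (intro conjI allI impI)
    show "\<exists>B. \<forall>n\<ge>1. integrable (M n) (H n) \<and> (\<integral>w. H n w \<partial>M n) < B"
      using H_int H_bound c by (intro exI[of _ "B / c"]) (auto simp: pos_less_divide_eq mult.commute)
  next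
    fix A assume A: "\<forall>n\<ge>1. A n \<in> sets (M n)" and A_lim: "(\<lambda>n. measure (M n) (A n)) \<longlonglongrightarrow> 0"
    define \<delta> where "\<delta> n = sqrt (measure (M n) (A n) + inverse (Suc n))" for n
    define C where "C n = {w \<in> space (M n). 1 / \<delta> n \<le> H n w}" for n
    have \<delta>_pos: "0 < \<delta> n" for n
      unfolding \<delta>_def by (intro real_sqrt_gt_zero add_nonneg_pos) auto
    have \<delta>_lim: "\<delta> \<longlonglongrightarrow> 0"
      unfolding \<delta>_def using tendsto_real_sqrt[OF tendsto_add[OF A_lim LIMSEQ_inverse_real_of_nat]] by simp
    have C_le: "measure (M n) (C n) \<le> \<delta> n * (B / c)" if n: "n \<ge> 1" for n
    proof -
      have "measure (M n) (C n) \<le> (\<integral>w. H n w \<partial>M n) / (1 / \<delta> n)"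
        unfolding C_def using H_int[OF n] H_nonneg \<delta>_pos
        by (intro integral_Markov_inequality_measure[where A="space (M n)"]) auto
      also have "\<dots> \<le> \<delta> n * (B / c)"
        using H_bound[OF n] \<delta>_pos c by (simp add: pos_le_divide_eq mult.commute)
      finally show ?thesis .
    qed
    have "(\<lambda>n. measure (M n) (C n)) \<longlonglongrightarrow> 0"
    proof (rule tendsto_sandwich)
      show "\<forall>\<^sub>F n in sequentially. 0 \<le> measure (M n) (C n)" by simp
      show "\<forall>\<^sub>F n in sequentially. measure (M n) (C n) \<le> \<delta> n * (B / c)"
        using C_le by (rule eventually_sequentiallyI)
      show "(\<lambda>n. \<delta> n * (B / c)) \<longlonglongrightarrow> 0"
        by (rule tendsto_mult_left_zero[OF \<delta>_lim])
    qed simp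
    moreover have C_sets: "\<forall>n\<ge>1. C n \<in> sets (M n)"
      unfolding C_def using H_int by (auto intro: borel_measurable_integrable)
    ultimately have ZC_lim: "(\<lambda>n. \<integral>w. \<bar>Z n w\<bar> * indicator (C n) w \<partial>M n) \<longlonglongrightarrow> 0"
      by (rule Z_small[rotated])
    show "(\<lambda>n. \<integral>w. \<bar>H n w\<bar> * indicator (A n) w \<partial>M n) \<longlonglongrightarrow> 0"
    proof (rule tendsto_sandwich)
      show "\<forall>\<^sub>F n in sequentially. 0 \<le> (\<integral>w. \<bar>H n w\<bar> * indicator (A n) w \<partial>M n)"
        by simp
      show "\<forall>\<^sub>F n in sequentially. (\<integral>w. \<bar>H n w\<bar> * indicator (A n) w \<partial>M n)
          \<le> (\<integral>w. \<bar>Z n w\<bar> * indicator (C n) w \<partial>M n) / c + \<delta> n"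
        using eventually_ge_at_top[of 1]
      proof eventually_elim
        case (elim n)
        interpret prob_space "M n" by (rule prob)
        have C: "C n \<in> sets (M n)" and A: "A n \<in> sets (M n)"
          using C_sets A elim by auto
        have HC_int: "integrable (M n) (\<lambda>w. H n w * indicator (C n) w)"
          using H_int[OF elim] C by (rule integrable_real_mult_indicator[rotated])
        have A_int: "integrable (M n) (\<lambda>w. 1 / \<delta> n * indicator (A n) w)"
          using A by (intro integrable_mult_right integrable_real_indicator) (auto simp: less_top[symmetric])
        have "(\<integral>w. \<bar>H n w\<bar> * indicator (A n) w \<partial>M n)
            \<le> (\<integral>w. H n w * indicator (C n) w + 1 / \<delta> n * indicator (A n) w \<partial>M n)"
          using H_int[OF elim] A HC_int A_int H_nonneg \<delta>_pos[of n]
          by (intro integral_mono integrable_add integrable_real_mult_indicator)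
             (auto simp: C_def indicator_def)
        also have "\<dots> = (\<integral>w. H n w * indicator (C n) w \<partial>M n) + measure (M n) (A n) / \<delta> n"
          using HC_int A_int A by (simp add: less_top[symmetric])
        also have "\<dots> \<le> (\<integral>w. \<bar>Z n w\<bar> * indicator (C n) w \<partial>M n) / c + \<delta> n"
        proof (rule add_mono)
          have "c * (\<integral>w. H n w * indicator (C n) w \<partial>M n) \<le> (\<integral>w. Z n w * indicator (C n) w \<partial>M n)"
            using dom[OF elim] unfolding C_def .
          also have "\<dots> \<le> (\<integral>w. \<bar>Z n w\<bar> * indicator (C n) w \<partial>M n)"
            using Z_int[OF elim] C
            by (intro integral_mono integrable_real_mult_indicator integrable_abs) (auto simp: indicator_def)
          finally show "(\<integral>w. H n w * indicator (C n) w \<partial>M n) \<le> (\<integral>w. \<bar>Z n w\<bar> * indicator (C n) w \<partial>M n) / c"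
            using c by (simp add: pos_le_divide_eq mult.commute)
          have "measure (M n) (A n) \<le> \<delta> n ^ 2"
            unfolding \<delta>_def by simp
          then show "measure (M n) (A n) / \<delta> n \<le> \<delta> n"
            using \<delta>_pos[of n] by (simp add: divide_le_eq power2_eq_square)
        qed
        finally show ?case .
      qed
      show "(\<lambda>n. (\<integral>w. \<bar>Z n w\<bar> * indicator (C n) w \<partial>M n) / c + \<delta> n) \<longlonglongrightarrow> 0"
        using tendsto_add[OF tendsto_divide_zero[OF ZC_lim] \<delta>_lim] by simp
    qed simp
  qed
qed

abbreviation cond_info :: "(nat \<Rightarrow> ('a \<times> 'b) pmf) \<Rightarrow> nat \<Rightarrow> 'a \<Rightarrow> 'b \<Rightarrow> real" where
  "cond_info P n x y \<equiv> log 2 (1 / cond_XY P n x y)"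

lemma pmf_le_pmf_map_snd: "pmf p (x, y) \<le> pmf (map_pmf snd p) y"
proof -
  have "measure_pmf.prob p {(x, y)} \<le> measure_pmf.prob p (snd -` {y})"
    by (rule measure_pmf.finite_measure_mono) auto
  then show ?thesis by (simp add: measure_pmf_single pmf_map)
qed

lemma cond_info_nonneg:
  assumes "0 < pmf (P n) (x, y)"
  shows "0 \<le> cond_info P n x y"
proof -
  have "pmf (P n) (x, y) \<le> PY P n y"
    unfolding PY_def by (rule pmf_le_pmf_map_snd)
  with assms have "0 < cond_XY P n x y" "cond_XY P n x y \<le> 1"
    by (auto simp: cond_XY_def)
  then show ?thesis by simp
qed

lemma nn_integral_pmf_pair:
  "(\<integral>\<^sup>+ z. f z \<partial>measure_pmf p) =
   (\<integral>\<^sup>+ x. \<integral>\<^sup>+ y. ennreal (pmf p (x, y)) * f (x, y) \<partial>count_space UNIV \<partial>count_space UNIV)"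
  using nn_integral_fst_count_space[of "\<lambda>z. ennreal (pmf p z) * f z"]
  by (simp add: nn_integral_measure_pmf)

lemma nn_integral_pmf_slice:
  "(\<integral>\<^sup>+ y. ennreal (pmf p (x, y)) \<partial>count_space UNIV) = ennreal (pmf (map_pmf fst p) x)"
proof -
  have "(\<integral>\<^sup>+ y. ennreal (pmf p (x, y)) \<partial>count_space UNIV) = emeasure p (Pair x ` UNIV)"
    by (rule nn_integral_pmf') (auto simp: inj_on_def)
  also have "Pair x ` UNIV = fst -` {x}" by auto
  finally show ?thesis by (simp add: pmf_map measure_pmf.emeasure_eq_measure)
qed

text \<open>Both sides vanish when \<open>PX P n x = 0\<close>, since division by zero yields zero.\<close>

lemma infsum_cond_YX:
  "(\<Sum>\<^sub>\<infinity> y \<in> T. cond_YX P n y x) = measure_pmf.prob (P n) (Pair x ` T) / PX P n x"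
proof -
  have "measure_pmf.prob (P n) (Pair x ` T) = (\<Sum>\<^sub>\<infinity> y \<in> T. pmf (P n) (x, y))"
    by (simp add: measure_pmf_conv_infsetsum infsetsum_infsum pmf_abs_summable
        infsum_reindex inj_on_def comp_def)
  then show ?thesis
    by (simp add: cond_YX_def infsum_cmult_left' divide_inverse)
qed

lemma measure_pmf_gt_tendsto_0:
  fixes g :: "'a \<Rightarrow> real"
  shows "(\<lambda>m. measure_pmf.prob p {z. real m < g z}) \<longlonglongrightarrow> 0"
proof -
  have "(\<Inter>m. {z. real m < g z}) = {}"
    by (auto simp: not_less) (meson reals_Archimedean2 less_asym)
  moreover have "decseq (\<lambda>m. {z. real m < g z})"
    by (auto simp: decseq_def)
  ultimately show ?thesis
    using Lim_measure_decseq[of "\<lambda>m. {z. real m < g z}" "measure_pmf p"] by simp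
qed

lemma hbar_conv_measure:
  "hbar P eps n x = Inf {a. 0 \<le> a \<and>
     measure_pmf.prob (P n) (Pair x ` {y. a < cond_info P n x y}) / PX P n x \<le> eps}"
  by (simp add: hbar_def infsum_cond_YX)

lemma hbar_eq_0_if_PX_eq_0:
  assumes "PX P n x = 0" "0 \<le> eps"
  shows "hbar P eps n x = 0"
  using assms by (simp add: hbar_conv_measure atLeast_def[symmetric])

lemma hbar_threshold_exists:
  assumes "0 < eps"
  shows "\<exists>a. 0 \<le> a \<and> measure_pmf.prob (P n) (Pair x ` {y. a < cond_info P n x y}) / PX P n x \<le> eps"
proof -
  let ?tail = "\<lambda>m::nat. measure_pmf.prob (P n) (Pair x ` {y. real m < cond_info P n x y})"
  have "?tail \<longlonglongrightarrow> 0"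
  proof (rule tendsto_sandwich[where f="\<lambda>_. 0"])
    show "\<forall>\<^sub>F m in sequentially. ?tail m
        \<le> measure_pmf.prob (P n) {z. real m < cond_info P n (fst z) (snd z)}"
      by (intro always_eventually allI measure_pmf.finite_measure_mono) auto
    show "(\<lambda>m. measure_pmf.prob (P n) {z. real m < cond_info P n (fst z) (snd z)}) \<longlonglongrightarrow> 0"
      by (rule measure_pmf_gt_tendsto_0)
  qed simp_all
  then have "(\<lambda>m. ?tail m / PX P n x) \<longlonglongrightarrow> 0"
    by (rule tendsto_divide_zero)
  then have "\<forall>\<^sub>F m in sequentially. ?tail m / PX P n x < eps"
    using assms by (rule order_tendstoD(2))
  then obtain m where "?tail m / PX P n x < eps"
    by (auto simp: eventually_sequentially)
  then show ?thesis
    by (intro exI[of _ "real m"]) simp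
qed

lemma hbar_nonneg:
  assumes "0 < eps"
  shows "0 \<le> hbar P eps n x"
  unfolding hbar_conv_measure using hbar_threshold_exists[OF assms]
  by (intro cInf_greatest) auto

lemma measure_slice_gt_if_less_hbar:
  assumes "0 < eps" "0 \<le> a" "a < hbar P eps n x"
  shows "eps * PX P n x < measure_pmf.prob (P n) (Pair x ` {y. a < cond_info P n x y})"
proof -
  have "\<not> measure_pmf.prob (P n) (Pair x ` {y. a < cond_info P n x y}) / PX P n x \<le> eps"
  proof
    assume "measure_pmf.prob (P n) (Pair x ` {y. a < cond_info P n x y}) / PX P n x \<le> eps"
    then have "hbar P eps n x \<le> a"
      unfolding hbar_conv_measure using \<open>0 \<le> a\<close>
      by (intro cInf_lower bdd_belowI[of _ 0]) auto
    with assms(3) show False by simp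
  qed
  moreover have "0 \<le> PX P n x"
    by (simp add: PX_def)
  ultimately show ?thesis
    using assms(1) by (cases "PX P n x = 0") (auto simp: not_le pos_less_divide_eq)
qed

lemma emeasure_slice_Markov:
  assumes "0 \<le> a"
  shows "ennreal a * emeasure (measure_pmf p) (Pair x ` {y. a < f y})
    \<le> (\<integral>\<^sup>+ y. ennreal (pmf p (x, y)) * ennreal (f y) \<partial>count_space UNIV)"
proof -
  have "emeasure (measure_pmf p) (Pair x ` {y. a < f y})
      = (\<integral>\<^sup>+ y. ennreal (pmf p (x, y)) * indicator {y. a < f y} y \<partial>count_space UNIV)"
    by (simp add: nn_integral_pmf'[symmetric] inj_on_def nn_integral_count_space_indicator)
  also have "ennreal a * \<dots> = (\<integral>\<^sup>+ y. ennreal a * (ennreal (pmf p (x, y)) * indicator {y. a < f y} y) \<partial>count_space UNIV)"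
    by (rule nn_integral_cmult[symmetric]) simp
  also have "\<dots> \<le> (\<integral>\<^sup>+ y. ennreal (pmf p (x, y)) * ennreal (f y) \<partial>count_space UNIV)"
    by (intro nn_integral_mono) (auto simp: indicator_def mult.commute intro!: mult_right_mono ennreal_leI)
  finally show ?thesis .
qed

lemma eps_hbar_PX_le:
  assumes eps: "0 < eps"
  shows "ennreal (eps * hbar P eps n x * PX P n x)
    \<le> (\<integral>\<^sup>+ y. ennreal (pmf (P n) (x, y)) * ennreal (cond_info P n x y) \<partial>count_space UNIV)"
    (is "_ \<le> ?R")
proof (cases "?R = \<top> \<or> hbar P eps n x = 0")
  case False
  then obtain r where r: "?R = ennreal r" "0 \<le> r" and h_pos: "0 < hbar P eps n x"
    using hbar_nonneg[OF eps, of P n x] by (cases ?R) auto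
  have PX_pos: "0 < PX P n x"
    using hbar_eq_0_if_PX_eq_0[of P n x eps] h_pos eps by (force simp: PX_def)
  have "a \<le> r / (eps * PX P n x)" if "0 < a" "a < hbar P eps n x" for a
  proof -
    have "ennreal (eps * PX P n x * a)
        \<le> ennreal a * emeasure (measure_pmf (P n)) (Pair x ` {y. a < cond_info P n x y})"
      using measure_slice_gt_if_less_hbar[OF eps _ that(2)] that(1)
      by (simp add: measure_pmf.emeasure_eq_measure ennreal_mult'[symmetric] mult.commute)
    also have "\<dots> \<le> ennreal r"
      using emeasure_slice_Markov[of a "P n" x "cond_info P n x"] that(1) r by simp
    finally show ?thesis
      using eps PX_pos r(2) by (simp add: pos_le_divide_eq mult.commute)
  qed
  then have "hbar P eps n x \<le> r / (eps * PX P n x)"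
    by (rule dense_le_bounded[OF h_pos])
  then show ?thesis
    using eps PX_pos r by (simp add: pos_le_divide_eq mult.commute mult.left_commute ennreal_leI)
qed auto

lemma nn_integral_hbar_dominated:
  assumes eps: "0 < eps" and c: "0 \<le> c"
  shows "ennreal eps * (\<integral>\<^sup>+ (x, y). ennreal (c * hbar P eps n x * indicator S x) \<partial>measure_pmf (P n))
    \<le> (\<integral>\<^sup>+ (x, y). ennreal (c * cond_info P n x y * indicator S x) \<partial>measure_pmf (P n))"
proof -
  have "(\<integral>\<^sup>+ (x, y). ennreal (c * hbar P eps n x * indicator S x) \<partial>measure_pmf (P n))
      = (\<integral>\<^sup>+ x. ennreal (c * hbar P eps n x * indicator S x) * ennreal (PX P n x) \<partial>count_space UNIV)"
    by (simp add: nn_integral_pmf_pair nn_integral_multc nn_integral_pmf_slice PX_def mult.commute)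
  then have "ennreal eps * (\<integral>\<^sup>+ (x, y). ennreal (c * hbar P eps n x * indicator S x) \<partial>measure_pmf (P n))
      = (\<integral>\<^sup>+ x. ennreal (c * indicator S x) * ennreal (eps * hbar P eps n x * PX P n x) \<partial>count_space UNIV)"
    using eps c hbar_nonneg[OF eps, of P n]
    by (simp add: nn_integral_cmult[symmetric] ennreal_mult'[symmetric] PX_def mult_ac)
  also have "\<dots> \<le> (\<integral>\<^sup>+ x. ennreal (c * indicator S x) *
      (\<integral>\<^sup>+ y. ennreal (pmf (P n) (x, y)) * ennreal (cond_info P n x y) \<partial>count_space UNIV) \<partial>count_space UNIV)"
    by (intro nn_integral_mono mult_left_mono eps_hbar_PX_le eps) simp
  also have "\<dots> = (\<integral>\<^sup>+ (x, y). ennreal (c * cond_info P n x y * indicator S x) \<partial>measure_pmf (P n))"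
    using c
    by (simp add: nn_integral_pmf_pair nn_integral_cmult[symmetric] ennreal_mult' mult_ac)
  finally show ?thesis .
qed

lemma integral_hbar_dominated:
  assumes eps: "0 < eps" and c: "0 \<le> c"
    and int: "integrable (measure_pmf (P n)) (\<lambda>(x, y). c * cond_info P n x y)"
  shows "integrable (measure_pmf (P n)) (\<lambda>(x, y). c * hbar P eps n x)"
    and "eps * (\<integral>(x, y). c * hbar P eps n x * indicator S x \<partial>measure_pmf (P n))
      \<le> (\<integral>(x, y). c * cond_info P n x y * indicator S x \<partial>measure_pmf (P n))"
proof -
  have info_int: "integrable (measure_pmf (P n)) (\<lambda>(x, y). c * cond_info P n x y * indicator T x)" for T
    using integrable_real_mult_indicator[OF _ int, of "fst -` T"]
    by (simp add: case_prod_beta' indicator_def)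
  have info_nonneg: "AE z in measure_pmf (P n). 0 \<le> (case z of (x, y) \<Rightarrow> c * cond_info P n x y * indicator T x)"
    for T using c by (intro AE_pmfI) (auto simp: cond_info_nonneg pmf_positive split: prod.split)
  have hbar_nonneg': "0 \<le> (case z of (x, y) \<Rightarrow> c * hbar P eps n x * indicator T x)"
    for z :: "'a \<times> 'b" and T using c hbar_nonneg[OF eps, of P n "fst z"] by (simp add: case_prod_beta' indicator_def)
  have hbar_le: "ennreal eps * (\<integral>\<^sup>+ (x, y). ennreal (c * hbar P eps n x * indicator T x) \<partial>measure_pmf (P n))
      \<le> ennreal (\<integral>(x, y). c * cond_info P n x y * indicator T x \<partial>measure_pmf (P n))" for T
    using nn_integral_hbar_dominated[OF eps c, of P n T] nn_integral_eq_integral[OF info_int[of T] info_nonneg[of T]]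
    by (simp add: prod.case_distrib)
  have hbar_int: "integrable (measure_pmf (P n)) (\<lambda>(x, y). c * hbar P eps n x * indicator T x)" for T
  proof -
    have "ennreal eps * (\<integral>\<^sup>+ (x, y). ennreal (c * hbar P eps n x * indicator T x) \<partial>measure_pmf (P n)) < \<top>"
      using hbar_le[of T] by (simp add: le_less_trans)
    then have "(\<integral>\<^sup>+ (x, y). ennreal (c * hbar P eps n x * indicator T x) \<partial>measure_pmf (P n)) < \<top>"
      using eps by (auto simp: ennreal_mult_less_top)
    then show ?thesis
      by (intro integrableI_nonneg AE_I2 hbar_nonneg') (simp_all add: prod.case_distrib)
  qed
  show "integrable (measure_pmf (P n)) (\<lambda>(x, y). c * hbar P eps n x)"
    using hbar_int[of UNIV] by simp
  have "ennreal eps * ennreal (\<integral>(x, y). c * hbar P eps n x * indicator S x \<partial>measure_pmf (P n))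
      \<le> ennreal (\<integral>(x, y). c * cond_info P n x y * indicator S x \<partial>measure_pmf (P n))"
    using hbar_le[of S] nn_integral_eq_integral[OF hbar_int[of S] AE_I2[OF hbar_nonneg']]
    by (simp add: prod.case_distrib)
  then show "eps * (\<integral>(x, y). c * hbar P eps n x * indicator S x \<partial>measure_pmf (P n))
      \<le> (\<integral>(x, y). c * cond_info P n x y * indicator S x \<partial>measure_pmf (P n))"
    using eps info_nonneg[of S]
    by (simp add: ennreal_mult'[symmetric] integral_nonneg_AE)
qed

lemma integral_hbar_level_set_dominated:
  fixes P :: "nat \<Rightarrow> ('a \<times> 'b) pmf" and n :: nat and eps c :: real
  defines "H \<equiv> \<lambda>(x, y). c * hbar P eps n x" and "Z \<equiv> \<lambda>(x, y). c * cond_info P n x y"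
  assumes "0 < eps" "0 \<le> c" "integrable (measure_pmf (P n)) Z"
  shows "eps * (\<integral>w. H w * indicator {w \<in> space (measure_pmf (P n)). K \<le> H w} w \<partial>measure_pmf (P n))
    \<le> (\<integral>w. Z w * indicator {w \<in> space (measure_pmf (P n)). K \<le> H w} w \<partial>measure_pmf (P n))"
proof -
  have level_set: "(\<lambda>w. (case w of (x, y) \<Rightarrow> f x y) * indicator {w \<in> space (measure_pmf (P n)). K \<le> H w} w)
      = (\<lambda>(x, y). f x y * indicator {x. K \<le> c * hbar P eps n x} x)" for f :: "'a \<Rightarrow> 'b \<Rightarrow> real"
    by (auto simp: fun_eq_iff indicator_def H_def)
  show ?thesis
    unfolding level_set[of "\<lambda>x y. c * hbar P eps n x", folded H_def]
      level_set[of "\<lambda>x y. c * cond_info P n x y", folded Z_def]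
    using integral_hbar_dominated(2)[OF assms(3,4,5)[unfolded Z_def]] .
qed

theorem lemma2:
  fixes P :: "nat \<Rightarrow> ('a::countable list \<times> 'b::countable list) pmf"
    and eps :: real
  assumes "corr_source P"
    and "condW (\<lambda>n. measure_pmf (P n))
               (\<lambda>n (x, y). (1 / real n) * log 2 (1 / cond_XY P n x y))"
    and "0 < eps" and "eps \<le> 1"
  shows "condW (\<lambda>n. measure_pmf (P n)) (\<lambda>n (x, y). (1 / real n) * hbar P eps n x)"
proof -
  have info_int: "integrable (measure_pmf (P n)) (\<lambda>(x, y). 1 / real n * cond_info P n x y)"
    if "n \<ge> 1" for n
    using assms(2) that unfolding condW_def by blast
  show ?thesis
  proof (rule condW_of_tail_dominated[OF assms(2) prob_space_measure_pmf _ _ assms(3)], goal_cases)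
    case (1 n w)
    then show ?case using hbar_nonneg[OF assms(3), of P n "fst w"] by (simp add: case_prod_beta')
  next
    case (2 n)
    then show ?case using integral_hbar_dominated(1)[OF assms(3) _ info_int] by simp
  next
    case (3 n K)
    then show ?case using integral_hbar_level_set_dominated[OF assms(3) _ info_int] by simp
  qed
qed

end
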